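(* Let $Y_1,\ldots,Y_n\in L_2(\mathcal{I})$ and let $p$ be an integer with $1\le p<n$. Let $\hat K$ be the operator and $K^*$ the $(n-p)\times(n-p)$ matrix defined in the context. Then $\hat K$ and $K^*$ have the same nonzero eigenvalues. Moreover, if $\hat\theta\neq0$ is an eigenvalue of $K^*$ with eigenvector $\gamma=(\gamma_1,\ldots,\gamma_{n-p})'$, then the function $\hat\psi(\cdot)=\sum_{t=1}^{n-p}\gamma_t\{Y_t(\cdot)-\bar Y(\cdot)\}$ satisfies $\hat K\hat\psi=\hat\theta\,\hat\psi$, i.e. it is an eigenfunction of $\hat K$ for the eigenvalue $\hat\theta$.
   Context: $\mathcal{I}$ is a compact interval, $L_2(\mathcal{I})$ has inner product $\langle f,g\rangle=\int_{\mathcal{I}}fg$, and a kernel $L(u,v)$ acts as the integral operator $(Lg)(u)=\int_{\mathcal{I}}L(u,v)g(v)\,dv$. Put $\bar Y=n^{-1}\sum_{j=1}^nY_j$, and for $k=1,\ldots,p$, $\hat M_k(u,v)=\frac{1}{n-p}\sum_{j=1}^{n-p}\{Y_j(u)-\bar Y(u)\}\{Y_{j+k}(v)-\bar Y(v)\}$ and $\hat K(u,v)=\sum_{k=1}^p\int_{\mathcal{I}}\hat M_k(u,z)\hat M_k(v,z)\,dz$. For $k=0,1,\ldots,p$ let $G_k$ be the $(n-p)\times(n-p)$ matrix with $(t,s)$ entry $\langle Y_{t+k}-\bar Y,\,Y_{s+k}-\bar Y\rangle$, and define $K^*=(n-p)^{-2}\sum_{k=1}^pG_kG_0$. *)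

theory Defs
  imports "HOL-Analysis.Analysis" "Jordan_Normal_Form.Char_Poly"
begin

definition L2_on :: "real set \<Rightarrow> (real \<Rightarrow> real) \<Rightarrow> bool" where
  "L2_on I f \<longleftrightarrow> f \<in> borel_measurable (lebesgue_on I)
     \<and> integrable (lebesgue_on I) (\<lambda>x. (f x)\<^sup>2)"

definition inner_L2 :: "real set \<Rightarrow> (real \<Rightarrow> real) \<Rightarrow> (real \<Rightarrow> real) \<Rightarrow> real" where
  "inner_L2 I f g = (LINT x|lebesgue_on I. f x * g x)"

definition kop :: "real set \<Rightarrow> (real \<Rightarrow> real \<Rightarrow> real) \<Rightarrow> (real \<Rightarrow> real) \<Rightarrow> real \<Rightarrow> real" where
  "kop I L g u = (LINT v|lebesgue_on I. L u v * g v)"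

definition op_eigenvalue :: "real set \<Rightarrow> (real \<Rightarrow> real \<Rightarrow> real) \<Rightarrow> real \<Rightarrow> bool" where
  "op_eigenvalue I L \<theta> \<longleftrightarrow> (\<exists>g. L2_on I g \<and> \<not> (AE x in lebesgue_on I. g x = 0)
       \<and> (AE u in lebesgue_on I. kop I L g u = \<theta> * g u))"

definition Ybar :: "(nat \<Rightarrow> real \<Rightarrow> real) \<Rightarrow> nat \<Rightarrow> real \<Rightarrow> real" where
  "Ybar Y n u = (\<Sum>j=1..n. Y j u) / real n"

definition Mhat :: "real set \<Rightarrow> (nat \<Rightarrow> real \<Rightarrow> real) \<Rightarrow> nat \<Rightarrow> nat \<Rightarrow> nat \<Rightarrow> real \<Rightarrow> real \<Rightarrow> real" where
  "Mhat I Y n p k u v = (1 / real (n - p)) *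
     (\<Sum>j=1..n-p. (Y j u - Ybar Y n u) * (Y (j + k) v - Ybar Y n v))"

definition Khat :: "real set \<Rightarrow> (nat \<Rightarrow> real \<Rightarrow> real) \<Rightarrow> nat \<Rightarrow> nat \<Rightarrow> real \<Rightarrow> real \<Rightarrow> real" where
  "Khat I Y n p u v = (\<Sum>k=1..p. LINT z|lebesgue_on I. Mhat I Y n p k u z * Mhat I Y n p k v z)"

text \<open>G_k as an (n-p) x (n-p) matrix; JNF matrices are 0-indexed, so entry (i,j)
  is the paper's entry (t,s) = (i+1, j+1).\<close>

definition Gmat :: "real set \<Rightarrow> (nat \<Rightarrow> real \<Rightarrow> real) \<Rightarrow> nat \<Rightarrow> nat \<Rightarrow> nat \<Rightarrow> real mat" where
  "Gmat I Y n p k = mat (n - p) (n - p) (\<lambda>(i, j).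
     inner_L2 I (\<lambda>u. Y (i + 1 + k) u - Ybar Y n u) (\<lambda>u. Y (j + 1 + k) u - Ybar Y n u))"

definition Kstar :: "real set \<Rightarrow> (nat \<Rightarrow> real \<Rightarrow> real) \<Rightarrow> nat \<Rightarrow> nat \<Rightarrow> real mat" where
  "Kstar I Y n p = mat (n - p) (n - p) (\<lambda>(i, j).
     (1 / (real (n - p))\<^sup>2) * (\<Sum>k\<in>{1..p}. (Gmat I Y n p k * Gmat I Y n p 0) $$ (i, j)))"

end

theory Submission
  imports Defs
begin

text \<open>Put \<open>X\<^sub>t = Y\<^sub>t - Ybar\<close>, let \<open>S \<gamma> = \<Sum>\<^sub>t \<gamma>\<^sub>t X\<^sub>t\<close> be the synthesis map from
  \<open>\<real>\<^sup>n\<^sup>-\<^sup>p\<close> to \<open>L\<^sub>2\<close> and \<open>A g = (\<langle>X\<^sub>t, g\<rangle>)\<^sub>t\<close> its adjoint, so that \<open>A S = G\<^sub>0\<close>.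
  Expanding the products in \<open>Khat\<close> shows \<open>Khat = S B A\<close> with \<open>B = (n - p)\<^sup>-\<^sup>2 \<Sum>\<^sub>k G\<^sub>k\<close>,
  while \<open>K\<^sup>* = B G\<^sub>0 = B A S\<close>. So if \<open>K\<^sup>* \<gamma> = \<theta> \<gamma>\<close> then \<open>Khat (S \<gamma>) = S K\<^sup>* \<gamma> = \<theta> S \<gamma>\<close>,
  and \<open>S \<gamma> \<noteq> 0\<close> because \<open>B A S \<gamma> = \<theta> \<gamma> \<noteq> 0\<close>; conversely an eigenfunction \<open>g\<close> of \<open>Khat\<close>
  coincides almost everywhere with \<open>S \<gamma>\<close> for \<open>\<gamma> = \<theta>\<^sup>-\<^sup>1 B A g\<close>, and this \<open>\<gamma>\<close> is an
  eigenvector of \<open>K\<^sup>*\<close> because \<open>A g = A S \<gamma>\<close>.\<close>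

definition square_integrable :: "'a measure \<Rightarrow> ('a \<Rightarrow> real) \<Rightarrow> bool" where
  "square_integrable M f \<longleftrightarrow> f \<in> borel_measurable M \<and> integrable M (\<lambda>x. (f x)\<^sup>2)"

lemma L2_on_iff_square_integrable: "L2_on I f \<longleftrightarrow> square_integrable (lebesgue_on I) f"
  by (simp add: L2_on_def square_integrable_def)

lemma square_integrable_mult_integrable:
  assumes "square_integrable M f" "square_integrable M g"
  shows "integrable M (\<lambda>x. f x * g x)"
proof (rule Bochner_Integration.integrable_bound)
  show "integrable M (\<lambda>x. (f x)\<^sup>2 + (g x)\<^sup>2)"
    using assms by (auto simp: square_integrable_def)
  show "(\<lambda>x. f x * g x) \<in> borel_measurable M"
    using assms by (auto simp: square_integrable_def)
  have "\<bar>f x * g x\<bar> \<le> (f x)\<^sup>2 + (g x)\<^sup>2" for x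
  proof -
    have "2 * \<bar>f x * g x\<bar> \<le> (f x)\<^sup>2 + (g x)\<^sup>2"
      using sum_squares_bound[of "\<bar>f x\<bar>" "\<bar>g x\<bar>"] by (simp add: abs_mult mult.assoc)
    then show ?thesis using abs_ge_zero[of "f x * g x"] by linarith
  qed
  then show "AE x in M. norm (f x * g x) \<le> norm ((f x)\<^sup>2 + (g x)\<^sup>2)"
    by simp
qed

lemma square_integrable_add:
  assumes "square_integrable M f" "square_integrable M g"
  shows "square_integrable M (\<lambda>x. f x + g x)"
proof -
  have "integrable M (\<lambda>x. (f x)\<^sup>2 + (g x)\<^sup>2 + 2 * f x * g x)"
    using assms square_integrable_mult_integrable[OF assms]
    by (auto simp: square_integrable_def mult.assoc)
  then show ?thesis
    using assms by (simp add: square_integrable_def power2_sum borel_measurable_add)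
qed

lemma square_integrable_scale:
  "square_integrable M f \<Longrightarrow> square_integrable M (\<lambda>x. c * f x)"
  by (auto simp: square_integrable_def power_mult_distrib)

lemma square_integrable_diff:
  assumes "square_integrable M f" "square_integrable M g"
  shows "square_integrable M (\<lambda>x. f x - g x)"
  using square_integrable_add[OF assms(1) square_integrable_scale[OF assms(2), of "-1"]] by simp

lemma square_integrable_sum:
  "(\<And>i. i \<in> S \<Longrightarrow> square_integrable M (f i)) \<Longrightarrow> square_integrable M (\<lambda>x. \<Sum>i\<in>S. f i x)"
  by (induction S rule: infinite_finite_induct)
     (simp_all add: square_integrable_add, simp_all add: square_integrable_def)

lemma integral_double_sum:
  fixes h :: "'i \<Rightarrow> 'j \<Rightarrow> 'a \<Rightarrow> real"
  assumes "\<And>i l. i \<in> A \<Longrightarrow> l \<in> B \<Longrightarrow> integrable M (h i l)"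
  shows "integral\<^sup>L M (\<lambda>z. \<Sum>i\<in>A. \<Sum>l\<in>B. c i l * h i l z)
    = (\<Sum>i\<in>A. \<Sum>l\<in>B. c i l * integral\<^sup>L M (h i l))"
  using assms by (simp add: integrable_sum)

definition synthesis :: "(nat \<Rightarrow> 'a \<Rightarrow> real) \<Rightarrow> real vec \<Rightarrow> 'a \<Rightarrow> real" where
  "synthesis X \<gamma> u = (\<Sum>j<dim_vec \<gamma>. \<gamma> $ j * X j u)"

definition analysis :: "'a measure \<Rightarrow> (nat \<Rightarrow> 'a \<Rightarrow> real) \<Rightarrow> nat \<Rightarrow> ('a \<Rightarrow> real) \<Rightarrow> real vec" where
  "analysis M X m g = vec m (\<lambda>l. LINT u|M. X l u * g u)"

definition gram :: "'a measure \<Rightarrow> (nat \<Rightarrow> 'a \<Rightarrow> real) \<Rightarrow> nat \<Rightarrow> real mat" where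
  "gram M X m = mat m m (\<lambda>(i, j). LINT u|M. X i u * X j u)"

definition finite_rank_kernel :: "(nat \<Rightarrow> 'a \<Rightarrow> real) \<Rightarrow> real mat \<Rightarrow> 'a \<Rightarrow> 'a \<Rightarrow> real" where
  "finite_rank_kernel X B u v = (\<Sum>i<dim_row B. \<Sum>l<dim_col B. X i u * B $$ (i, l) * X l v)"

lemma gram_carrier_mat [simp]: "gram M X m \<in> carrier_mat m m"
  by (simp add: gram_def)

lemma synthesis_smult: "synthesis X (c \<cdot>\<^sub>v \<gamma>) u = c * synthesis X \<gamma> u"
  by (simp add: synthesis_def sum_distrib_left mult_ac)

lemma synthesis_zero: "synthesis X (0\<^sub>v m) u = 0"
  by (simp add: synthesis_def)

lemma square_integrable_synthesis:
  "(\<And>j. j < dim_vec \<gamma> \<Longrightarrow> square_integrable M (X j)) \<Longrightarrow> square_integrable M (synthesis X \<gamma>)"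
  unfolding synthesis_def[abs_def] by (intro square_integrable_sum square_integrable_scale) auto

lemma analysis_synthesis:
  assumes X: "\<And>j. j < m \<Longrightarrow> square_integrable M (X j)" and \<gamma>: "\<gamma> \<in> carrier_vec m"
  shows "analysis M X m (synthesis X \<gamma>) = gram M X m *\<^sub>v \<gamma>"
proof (rule eq_vecI)
  fix l assume "l < dim_vec (gram M X m *\<^sub>v \<gamma>)"
  then have l: "l < m" by (simp add: gram_def)
  have "(LINT u|M. X l u * synthesis X \<gamma> u) = integral\<^sup>L M (\<lambda>u. \<Sum>j<m. \<gamma> $ j * (X l u * X j u))"
    using \<gamma> by (simp add: synthesis_def sum_distrib_left mult_ac)
  also have "\<dots> = (\<Sum>j<m. \<gamma> $ j * (LINT u|M. X l u * X j u))"
    using l X by (simp add: integrable_sum square_integrable_mult_integrable)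
  finally show "analysis M X m (synthesis X \<gamma>) $ l = (gram M X m *\<^sub>v \<gamma>) $ l"
    using l \<gamma> by (simp add: analysis_def gram_def scalar_prod_def atLeast0LessThan mult_ac)
qed (simp add: analysis_def gram_def)

lemma analysis_AE_zero:
  "AE u in M. g u = 0 \<Longrightarrow> analysis M X m g = 0\<^sub>v m"
  unfolding analysis_def
  by (intro eq_vecI) (auto intro!: integral_eq_zero_AE elim!: AE_mp)

lemma analysis_cong_AE:
  assumes "AE u in M. g u = h u"
    and "\<And>l. l < m \<Longrightarrow> (\<lambda>u. X l u * g u) \<in> borel_measurable M"
    and "\<And>l. l < m \<Longrightarrow> (\<lambda>u. X l u * h u) \<in> borel_measurable M"
  shows "analysis M X m g = analysis M X m h"
proof (rule eq_vecI)
  fix l assume "l < dim_vec (analysis M X m h)"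
  then have l: "l < m" by (simp add: analysis_def)
  have "AE u in M. X l u * g u = X l u * h u"
    using assms(1) by eventually_elim simp
  then have "(LINT u|M. X l u * g u) = (LINT u|M. X l u * h u)"
    using l assms(2,3) by (intro integral_cong_AE)
  then show "analysis M X m g $ l = analysis M X m h $ l"
    using l by (simp add: analysis_def)
qed (simp add: analysis_def)

lemma integral_finite_rank_kernel:
  assumes B: "B \<in> carrier_mat m m" and g: "\<And>l. l < m \<Longrightarrow> integrable M (\<lambda>v. X l v * g v)"
  shows "(LINT v|M. finite_rank_kernel X B u v * g v) = synthesis X (B *\<^sub>v analysis M X m g) u"
proof -
  have "(LINT v|M. finite_rank_kernel X B u v * g v)
      = integral\<^sup>L M (\<lambda>v. \<Sum>i<m. \<Sum>l<m. (X i u * B $$ (i, l)) * (X l v * g v))"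
    using B by (simp add: finite_rank_kernel_def sum_distrib_left sum_distrib_right mult_ac)
  also have "\<dots> = (\<Sum>i<m. \<Sum>l<m. (X i u * B $$ (i, l)) * (LINT v|M. X l v * g v))"
    using g by (intro integral_double_sum) auto
  also have "\<dots> = synthesis X (B *\<^sub>v analysis M X m g) u"
    using B by (simp add: synthesis_def analysis_def scalar_prod_def atLeast0LessThan
        sum_distrib_left sum_distrib_right mult_ac)
  finally show ?thesis .
qed

lemma finite_rank_kernel_eigenfunction:
  assumes B: "B \<in> carrier_mat m m" and X: "\<forall>j<m. square_integrable M (X j)"
    and \<theta>: "\<theta> \<noteq> 0" and ev: "eigenvector (B * gram M X m) \<gamma> \<theta>"
  shows "square_integrable M (synthesis X \<gamma>)"
    and "\<not> (AE u in M. synthesis X \<gamma> u = 0)"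
    and "(LINT v|M. finite_rank_kernel X B u v * synthesis X \<gamma> v) = \<theta> * synthesis X \<gamma> u"
proof -
  have \<gamma>: "\<gamma> \<in> carrier_vec m" and \<gamma>0: "\<gamma> \<noteq> 0\<^sub>v m"
    and eq: "B *\<^sub>v (gram M X m *\<^sub>v \<gamma>) = \<theta> \<cdot>\<^sub>v \<gamma>"
    using ev B by (auto simp: eigenvector_def assoc_mult_mat_vec[OF B gram_carrier_mat])
  show sq: "square_integrable M (synthesis X \<gamma>)"
    using \<gamma> X by (intro square_integrable_synthesis) auto
  have A: "analysis M X m (synthesis X \<gamma>) = gram M X m *\<^sub>v \<gamma>"
    using X \<gamma> by (intro analysis_synthesis) auto
  show "(LINT v|M. finite_rank_kernel X B u v * synthesis X \<gamma> v) = \<theta> * synthesis X \<gamma> u"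
    using B X sq
    by (simp add: integral_finite_rank_kernel square_integrable_mult_integrable A eq synthesis_smult)
  show "\<not> (AE u in M. synthesis X \<gamma> u = 0)"
  proof
    assume "AE u in M. synthesis X \<gamma> u = 0"
    then have "gram M X m *\<^sub>v \<gamma> = 0\<^sub>v m"
      using A by (simp add: analysis_AE_zero)
    moreover have "B *\<^sub>v 0\<^sub>v m = 0\<^sub>v m"
      using B by (intro eq_vecI) (auto simp: scalar_prod_def)
    ultimately have "\<theta> \<cdot>\<^sub>v \<gamma> = 0\<^sub>v m"
      using eq by simp
    then have "\<gamma> = (1 / \<theta>) \<cdot>\<^sub>v 0\<^sub>v m"
      using \<theta> by (metis smult_smult_assoc one_smult_vec nonzero_divide_eq_eq)
    then show False using \<gamma>0 by auto
  qed
qed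

lemma finite_rank_kernel_eigenvalue:
  assumes B: "B \<in> carrier_mat m m" and X: "\<forall>j<m. square_integrable M (X j)"
    and \<theta>: "\<theta> \<noteq> 0" and g: "square_integrable M g" and g0: "\<not> (AE u in M. g u = 0)"
    and eig: "AE u in M. (LINT v|M. finite_rank_kernel X B u v * g v) = \<theta> * g u"
  shows "eigenvalue (B * gram M X m) \<theta>"
proof -
  define \<gamma> where "\<gamma> = (1 / \<theta>) \<cdot>\<^sub>v (B *\<^sub>v analysis M X m g)"
  have \<gamma>: "\<gamma> \<in> carrier_vec m"
    using B by (simp add: \<gamma>_def analysis_def)
  have Xg: "\<And>l. l < m \<Longrightarrow> integrable M (\<lambda>v. X l v * g v)"
    using X g by (simp add: square_integrable_mult_integrable)
  have g_eq: "AE u in M. g u = synthesis X \<gamma> u"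
    using eig by eventually_elim (simp add: integral_finite_rank_kernel[OF B Xg] \<gamma>_def synthesis_smult \<theta>)
  have "analysis M X m g = analysis M X m (synthesis X \<gamma>)"
    using g_eq g X \<gamma>
    by (intro analysis_cong_AE borel_measurable_integrable square_integrable_mult_integrable
        square_integrable_synthesis) auto
  then have "B *\<^sub>v (gram M X m *\<^sub>v \<gamma>) = \<theta> \<cdot>\<^sub>v \<gamma>"
    using X \<gamma> \<theta> by (simp add: analysis_synthesis \<gamma>_def smult_smult_assoc)
  moreover have "\<gamma> \<noteq> 0\<^sub>v m"
  proof
    assume "\<gamma> = 0\<^sub>v m"
    then have "AE u in M. g u = 0"
      using g_eq by (simp add: synthesis_zero)
    then show False using g0 by contradiction
  qed
  ultimately have "eigenvector (B * gram M X m) \<gamma> \<theta>"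
    using B \<gamma> by (simp add: eigenvector_def assoc_mult_mat_vec[OF B gram_carrier_mat])
  then show ?thesis unfolding eigenvalue_def by blast
qed

definition centred :: "(nat \<Rightarrow> real \<Rightarrow> real) \<Rightarrow> nat \<Rightarrow> nat \<Rightarrow> real \<Rightarrow> real" where
  "centred Y n t u = Y t u - Ybar Y n u"

definition lag_gram_sum :: "real set \<Rightarrow> (nat \<Rightarrow> real \<Rightarrow> real) \<Rightarrow> nat \<Rightarrow> nat \<Rightarrow> real mat" where
  "lag_gram_sum I Y n p = mat (n - p) (n - p)
     (\<lambda>(i, l). (1 / real (n - p))\<^sup>2 * (\<Sum>k\<in>{1..p}. Gmat I Y n p k $$ (i, l)))"

lemma square_integrable_centred:
  assumes "\<forall>j\<in>{1..n}. L2_on I (Y j)" and "t \<in> {1..n}"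
  shows "square_integrable (lebesgue_on I) (centred Y n t)"
proof -
  have Y: "\<And>j. j \<in> {1..n} \<Longrightarrow> square_integrable (lebesgue_on I) (Y j)"
    using assms(1) by (simp add: L2_on_iff_square_integrable)
  have "square_integrable (lebesgue_on I) (\<lambda>u. (1 / real n) * (\<Sum>j=1..n. Y j u))"
    by (intro square_integrable_scale square_integrable_sum Y)
  then show ?thesis
    unfolding centred_def[abs_def] Ybar_def using Y assms(2)
    by (intro square_integrable_diff) auto
qed

lemma Gmat_eq_gram: "Gmat I Y n p k = gram (lebesgue_on I) (\<lambda>j. centred Y n (j + 1 + k)) (n - p)"
  by (simp add: Gmat_def gram_def inner_L2_def centred_def)

lemma Kstar_eq_mult: "Kstar I Y n p = lag_gram_sum I Y n p * Gmat I Y n p 0"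
proof (rule eq_matI)
  let ?m = "n - p" and ?c = "(1 / real (n - p))\<^sup>2" and ?G = "Gmat I Y n p"
  have G: "dim_row (?G k) = ?m" "dim_col (?G k) = ?m" for k
    by (simp_all add: Gmat_def)
  fix i j assume "i < dim_row (lag_gram_sum I Y n p * ?G 0)" "j < dim_col (lag_gram_sum I Y n p * ?G 0)"
  then have i: "i < ?m" and j: "j < ?m"
    using G by (auto simp: lag_gram_sum_def)
  have "Kstar I Y n p $$ (i, j) = ?c * (\<Sum>k\<in>{1..p}. \<Sum>l<?m. ?G k $$ (i, l) * ?G 0 $$ (l, j))"
    using i j G by (simp add: Kstar_def scalar_prod_def atLeast0LessThan power_one_over)
  also have "\<dots> = (\<Sum>l<?m. (?c * (\<Sum>k\<in>{1..p}. ?G k $$ (i, l))) * ?G 0 $$ (l, j))"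
    by (simp add: sum_distrib_left sum_distrib_right mult_ac) (rule sum.swap)
  also have "\<dots> = (lag_gram_sum I Y n p * ?G 0) $$ (i, j)"
    using i j G by (simp add: lag_gram_sum_def scalar_prod_def atLeast0LessThan)
  finally show "Kstar I Y n p $$ (i, j) = (lag_gram_sum I Y n p * ?G 0) $$ (i, j)" .
qed (simp_all add: Kstar_def lag_gram_sum_def Gmat_def)

lemma Mhat_eq: "Mhat I Y n p k u z
    = (1 / real (n - p)) * (\<Sum>i<n - p. centred Y n (Suc i) u * centred Y n (Suc i + k) z)"
  unfolding Mhat_def centred_def sum_bounds_lt_plus1[symmetric] by simp

lemma integral_Mhat_mult:
  assumes Y: "\<forall>j\<in>{1..n}. L2_on I (Y j)" and k: "k \<in> {1..p}" and "p < n"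
  shows "(LINT z|lebesgue_on I. Mhat I Y n p k u z * Mhat I Y n p k v z)
    = (\<Sum>i<n - p. \<Sum>l<n - p. ((1 / real (n - p))\<^sup>2 * (centred Y n (Suc i) u * centred Y n (Suc l) v))
        * Gmat I Y n p k $$ (i, l))"
proof -
  let ?m = "n - p" and ?X = "\<lambda>i z. centred Y n (Suc i + k) z"
  let ?c = "\<lambda>i l. (1 / real ?m)\<^sup>2 * (centred Y n (Suc i) u * centred Y n (Suc l) v)"
  have "Mhat I Y n p k u z * Mhat I Y n p k v z = (\<Sum>i<?m. \<Sum>l<?m. ?c i l * (?X i z * ?X l z))" for z
  proof -
    have "Mhat I Y n p k u z * Mhat I Y n p k v z = (1 / real ?m)\<^sup>2 *
        ((\<Sum>i<?m. centred Y n (Suc i) u * ?X i z) * (\<Sum>l<?m. centred Y n (Suc l) v * ?X l z))"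
      unfolding Mhat_eq by (simp add: power2_eq_square)
    also have "\<dots> = (\<Sum>i<?m. \<Sum>l<?m. ?c i l * (?X i z * ?X l z))"
      unfolding sum_product by (simp add: sum_distrib_left mult_ac)
    finally show ?thesis .
  qed
  then have "(LINT z|lebesgue_on I. Mhat I Y n p k u z * Mhat I Y n p k v z)
      = integral\<^sup>L (lebesgue_on I) (\<lambda>z. \<Sum>i<?m. \<Sum>l<?m. ?c i l * (?X i z * ?X l z))"
    by simp
  also have "\<dots> = (\<Sum>i<?m. \<Sum>l<?m. ?c i l * (LINT z|lebesgue_on I. ?X i z * ?X l z))"
    using assms
    by (intro integral_double_sum square_integrable_mult_integrable square_integrable_centred) auto
  also have "\<dots> = (\<Sum>i<?m. \<Sum>l<?m. ?c i l * Gmat I Y n p k $$ (i, l))"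
    by (simp add: Gmat_eq_gram gram_def)
  finally show ?thesis .
qed

lemma Khat_eq_finite_rank_kernel:
  assumes "\<forall>j\<in>{1..n}. L2_on I (Y j)" and "p < n"
  shows "Khat I Y n p u v = finite_rank_kernel (\<lambda>j. centred Y n (Suc j)) (lag_gram_sum I Y n p) u v"
proof -
  let ?m = "n - p" and ?X = "\<lambda>j. centred Y n (Suc j)"
  let ?c = "\<lambda>i l. (1 / real ?m)\<^sup>2 * (?X i u * ?X l v)"
  have "Khat I Y n p u v = (\<Sum>k\<in>{1..p}. \<Sum>i<?m. \<Sum>l<?m. ?c i l * Gmat I Y n p k $$ (i, l))"
    unfolding Khat_def using assms by (simp add: integral_Mhat_mult)
  also have "\<dots> = (\<Sum>i<?m. \<Sum>k\<in>{1..p}. \<Sum>l<?m. ?c i l * Gmat I Y n p k $$ (i, l))"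
    by (rule sum.swap)
  also have "\<dots> = (\<Sum>i<?m. \<Sum>l<?m. \<Sum>k\<in>{1..p}. ?c i l * Gmat I Y n p k $$ (i, l))"
    by (intro sum.cong refl sum.swap)
  also have "\<dots> = finite_rank_kernel ?X (lag_gram_sum I Y n p) u v"
    by (simp add: finite_rank_kernel_def lag_gram_sum_def sum_distrib_left mult_ac)
  finally show ?thesis .
qed

lemma sum_centred_eq_synthesis:
  assumes "dim_vec \<gamma> = m"
  shows "(\<Sum>t=1..m. \<gamma> $ (t - 1) * (Y t u - Ybar Y n u)) = synthesis (\<lambda>j. centred Y n (Suc j)) \<gamma> u"
  using assms unfolding synthesis_def sum_bounds_lt_plus1[symmetric]
  by (simp add: centred_def)

theorem proposition2:
  fixes Y :: "nat \<Rightarrow> real \<Rightarrow> real" and a b :: real and n p :: nat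
  assumes "\<forall>j\<in>{1..n}. L2_on {a..b} (Y j)"
    and "1 \<le> p" and "p < n"
  shows "(\<forall>\<theta>. \<theta> \<noteq> 0 \<longrightarrow>
            (op_eigenvalue {a..b} (Khat {a..b} Y n p) \<theta> \<longleftrightarrow> eigenvalue (Kstar {a..b} Y n p) \<theta>))
       \<and> (\<forall>\<theta> \<gamma>. \<theta> \<noteq> 0 \<longrightarrow> eigenvector (Kstar {a..b} Y n p) \<gamma> \<theta> \<longrightarrow>
            (let \<psi> = (\<lambda>u. \<Sum>t=1..n-p. (\<gamma> $ (t - 1)) * (Y t u - Ybar Y n u))
             in L2_on {a..b} \<psi> \<and> \<not> (AE u in lebesgue_on {a..b}. \<psi> u = 0)
                \<and> (\<forall>u\<in>{a..b}. kop {a..b} (Khat {a..b} Y n p) \<psi> u = \<theta> * \<psi> u)))"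
proof -
  let ?M = "lebesgue_on {a..b}" and ?m = "n - p" and ?X = "\<lambda>j. centred Y n (Suc j)"
  let ?B = "lag_gram_sum {a..b} Y n p"
  have B: "?B \<in> carrier_mat ?m ?m"
    by (simp add: lag_gram_sum_def)
  have X: "\<forall>j<?m. square_integrable ?M (?X j)"
    using assms by (auto intro: square_integrable_centred)
  have Kstar: "Kstar {a..b} Y n p = ?B * gram ?M ?X ?m"
    by (simp add: Kstar_eq_mult Gmat_eq_gram)
  have Khat: "Khat {a..b} Y n p = finite_rank_kernel ?X ?B"
    using assms by (intro ext Khat_eq_finite_rank_kernel)
  have \<psi>: "(\<Sum>t=1..n-p. \<gamma> $ (t - 1) * (Y t u - Ybar Y n u)) = synthesis ?X \<gamma> u"
    if "eigenvector (?B * gram ?M ?X ?m) \<gamma> \<theta>" for \<gamma> \<theta> u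
    using that B by (intro sum_centred_eq_synthesis) (simp add: eigenvector_def)
  show ?thesis
    unfolding op_eigenvalue_def kop_def L2_on_iff_square_integrable Kstar Khat Let_def
    apply (rule conjI; intro allI impI iffI)
    subgoal for \<theta>
      using finite_rank_kernel_eigenvalue[OF B X] by blast
    subgoal for \<theta>
      using finite_rank_kernel_eigenfunction[OF B X] unfolding eigenvalue_def
      by (blast intro: AE_I2)
    subgoal premises ev for \<theta> \<gamma>
      unfolding \<psi>[OF ev(2)] using finite_rank_kernel_eigenfunction[OF B X ev] by blast
    done
qed

end
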